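(* Let $A$ be a sequence algebra and $X$ an essential homogeneous normed $A$-module with completion $\overline X$. Then for every $x\in\overline X$ there exist $\bar x\in\overline X$ and real numbers $\lambda_n\ge1$ with $\lambda_n\to\infty$ such that $\bar x_n=\lambda_nx_n$ for all $n\in\mathbb N$.
   Context: Modules are contractive ($\|a\cdot x\|\le\|a\|\|x\|$). A sequence algebra is a normed algebra of complex sequences with coordinatewise operations containing $c_{00}$ as a dense subalgebra, with $\|\mathbf p^n\|=1$, where $\mathbf p^n$ has $1$ in place $n$ and $0$ elsewhere. For $x$ in a module, $x_n:=\mathbf p^n\cdot x$. $X$ is essential if the closed linear span of $\{a\cdot x\}$ is $X$; homogeneous if $\|x_n\|\le\|y_n\|$ for all $n$ implies $\|x\|\le\|y\|$. *)

theory Defs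
  imports "HOL-Analysis.Analysis"
begin

definition pvec :: "nat \<Rightarrow> (nat \<Rightarrow> complex)" where
  "pvec n = (\<lambda>k. if k = n then 1 else 0)"

definition c00 :: "(nat \<Rightarrow> complex) set" where
  "c00 = {a. finite {n. a n \<noteq> 0}}"

definition seq_algebra :: "(nat \<Rightarrow> complex) set \<Rightarrow> ((nat \<Rightarrow> complex) \<Rightarrow> real) \<Rightarrow> bool" where
  "seq_algebra A N \<longleftrightarrow>
     (\<forall>a\<in>A. \<forall>b\<in>A. (\<lambda>n. a n + b n) \<in> A \<and> (\<lambda>n. a n * b n) \<in> A) \<and>
     (\<forall>c. \<forall>a\<in>A. (\<lambda>n. c * a n) \<in> A) \<and>
     (\<forall>a\<in>A. 0 \<le> N a \<and> (N a = 0 \<longleftrightarrow> a = (\<lambda>n. 0))) \<and>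
     (\<forall>a\<in>A. \<forall>b\<in>A. N (\<lambda>n. a n + b n) \<le> N a + N b) \<and>
     (\<forall>c. \<forall>a\<in>A. N (\<lambda>n. c * a n) = cmod c * N a) \<and>
     (\<forall>a\<in>A. \<forall>b\<in>A. N (\<lambda>n. a n * b n) \<le> N a * N b) \<and>
     c00 \<subseteq> A \<and>
     (\<forall>a\<in>A. \<forall>e>0. \<exists>b\<in>c00. N (\<lambda>n. a n - b n) < e) \<and>
     (\<forall>n. N (pvec n) = 1)"

text \<open>A complex Banach space structure on a real Banach space type: sc is a complex
  scalar multiplication extending the real one and compatible with the norm.\<close>
definition complex_scalar :: "(complex \<Rightarrow> 'x::banach \<Rightarrow> 'x) \<Rightarrow> bool" where
  "complex_scalar sc \<longleftrightarrow>
     (\<forall>r x. sc (complex_of_real r) x = r *\<^sub>R x) \<and>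
     (\<forall>c d x. sc (c * d) x = sc c (sc d x)) \<and>
     (\<forall>c d x. sc (c + d) x = sc c x + sc d x) \<and>
     (\<forall>c x y. sc c (x + y) = sc c x + sc c y) \<and>
     (\<forall>c x. norm (sc c x) = cmod c * norm x)"

definition cplx_span :: "(complex \<Rightarrow> 'x::banach \<Rightarrow> 'x) \<Rightarrow> 'x set \<Rightarrow> 'x set" where
  "cplx_span sc M = {(\<Sum>i<k. sc (c i) (v i)) | (k::nat) c v. \<forall>i<k. v i \<in> M}"

definition contractive_module ::
  "(nat \<Rightarrow> complex) set \<Rightarrow> ((nat \<Rightarrow> complex) \<Rightarrow> real) \<Rightarrow> (complex \<Rightarrow> 'x::banach \<Rightarrow> 'x)
    \<Rightarrow> ((nat \<Rightarrow> complex) \<Rightarrow> 'x \<Rightarrow> 'x) \<Rightarrow> bool" where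
  "contractive_module A N sc act \<longleftrightarrow>
     (\<forall>a\<in>A. \<forall>b\<in>A. \<forall>x. act (\<lambda>n. a n + b n) x = act a x + act b x) \<and>
     (\<forall>a\<in>A. \<forall>c x. act (\<lambda>n. c * a n) x = sc c (act a x)) \<and>
     (\<forall>a\<in>A. \<forall>x y. act a (x + y) = act a x + act a y) \<and>
     (\<forall>a\<in>A. \<forall>c x. act a (sc c x) = sc c (act a x)) \<and>
     (\<forall>a\<in>A. \<forall>b\<in>A. \<forall>x. act (\<lambda>n. a n * b n) x = act a (act b x)) \<and>
     (\<forall>a\<in>A. \<forall>x. norm (act a x) \<le> N a * norm x)"

definition submodule ::
  "(nat \<Rightarrow> complex) set \<Rightarrow> (complex \<Rightarrow> 'x::banach \<Rightarrow> 'x)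
    \<Rightarrow> ((nat \<Rightarrow> complex) \<Rightarrow> 'x \<Rightarrow> 'x) \<Rightarrow> 'x set \<Rightarrow> bool" where
  "submodule A sc act X \<longleftrightarrow>
     0 \<in> X \<and> (\<forall>x\<in>X. \<forall>y\<in>X. x + y \<in> X) \<and> (\<forall>c. \<forall>x\<in>X. sc c x \<in> X) \<and>
     (\<forall>a\<in>A. \<forall>x\<in>X. act a x \<in> X)"

definition essential ::
  "(nat \<Rightarrow> complex) set \<Rightarrow> (complex \<Rightarrow> 'x::banach \<Rightarrow> 'x)
    \<Rightarrow> ((nat \<Rightarrow> complex) \<Rightarrow> 'x \<Rightarrow> 'x) \<Rightarrow> 'x set \<Rightarrow> bool" where
  "essential A sc act X \<longleftrightarrow>
     closure (cplx_span sc {act a x | a x. a \<in> A \<and> x \<in> X}) \<inter> X = X"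

definition homogeneous ::
  "((nat \<Rightarrow> complex) \<Rightarrow> 'x::banach \<Rightarrow> 'x) \<Rightarrow> 'x set \<Rightarrow> bool" where
  "homogeneous act X \<longleftrightarrow>
     (\<forall>x\<in>X. \<forall>y\<in>X. (\<forall>n. norm (act (pvec n) x) \<le> norm (act (pvec n) y)) \<longrightarrow> norm x \<le> norm y)"

end

theory Submission
  imports Defs
begin

(* Let e_m = p^0 + ... + p^(m-1) be the truncation to the first m coordinates.
   (1) By homogeneity, x -> e_m.x is contractive on X, hence on all of the completion,
       because a continuous map that is contractive on a dense set is contractive everywhere.
   (2) The truncations form an approximate identity: e_m.z -> z for every z.  This holds for
       z = a.y by density of c00 in A, hence on the linear span of such vectors, and then on
       its closure (which is everything, by essentiality) since the e_m are uniformly bounded.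
   (3) Abstract amplification: if T_m z -> z and the coordinate maps P_n satisfy
       P_n (T_m z) = [n < m] P_n z, choose m_k > k with |z - T_(m_k) z| < 2^-k and put
       zb = z + sum_k (z - T_(m_k) z).  Then P_n zb = lam_n P_n z with
       lam_n = 1 + #{k. m_k <= n}, which is >= 1 and tends to infinity. *)

section \<open>Abstract facts about normed spaces and sequences\<close>

lemma contractive_on_dense:
  fixes T :: "'a::real_normed_vector \<Rightarrow> 'b::real_normed_vector"
  assumes "continuous_on UNIV T" and "closure D = UNIV" and "\<And>y. y \<in> D \<Longrightarrow> norm (T y) \<le> norm y"
  shows "norm (T z) \<le> norm z"
proof -
  have "D \<subseteq> {z. norm (T z) \<le> norm z}" using assms(3) by blast
  moreover have "closed {z. norm (T z) \<le> norm z}"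
    by (intro closed_Collect_le continuous_on_norm assms(1) continuous_on_id)
  ultimately have "closure D \<subseteq> {z. norm (T z) \<le> norm z}" by (rule closure_minimal)
  then show ?thesis using assms(2) by blast
qed

lemma approximate_identity_closure:
  fixes T :: "nat \<Rightarrow> 'a::real_normed_vector \<Rightarrow> 'a"
  assumes lin: "\<And>m. linear (T m)" and contr: "\<And>m z. norm (T m z) \<le> norm z"
    and conv: "\<And>w. w \<in> D \<Longrightarrow> (\<lambda>m. T m w) \<longlonglongrightarrow> w" and z: "z \<in> closure D"
  shows "(\<lambda>m. T m z) \<longlonglongrightarrow> z"
proof (rule LIMSEQ_I)
  fix \<epsilon> :: real assume "0 < \<epsilon>"
  then obtain w where w: "w \<in> D" "dist w z < \<epsilon>/3"
    using z unfolding closure_approachable by (meson zero_less_divide_iff zero_less_numeral)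
  obtain M where M: "\<forall>m\<ge>M. norm (T m w - w) < \<epsilon>/3"
    using LIMSEQ_D[OF conv[OF w(1)]] \<open>0 < \<epsilon>\<close> by (meson zero_less_divide_iff zero_less_numeral)
  have "norm (T m z - z) < \<epsilon>" if "M \<le> m" for m
  proof -
    have "T m z - z = (T m w - w) + (w - z) - T m (w - z)"
      using linear_diff[OF lin] by simp
    then have "norm (T m z - z) \<le> norm ((T m w - w) + (w - z)) + norm (T m (w - z))"
      by (metis norm_triangle_ineq4)
    moreover have "norm ((T m w - w) + (w - z)) \<le> norm (T m w - w) + norm (w - z)"
      by (rule norm_triangle_ineq)
    moreover have "norm (T m (w - z)) \<le> norm (w - z)" by (rule contr)
    moreover have "norm (w - z) < \<epsilon>/3" using w(2) by (simp add: dist_norm)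
    moreover have "norm (T m w - w) < \<epsilon>/3" using M that by blast
    ultimately show ?thesis by linarith
  qed
  then show "\<exists>M. \<forall>m\<ge>M. norm (T m z - z) < \<epsilon>" by blast
qed

lemma fast_subsequence:
  fixes f :: "nat \<Rightarrow> 'a::metric_space"
  assumes "f \<longlonglongrightarrow> L"
  obtains mm where "\<And>k. k < mm k" and "\<And>k. dist (f (mm k)) L < (1/2)^k"
proof -
  have "\<exists>m. k < m \<and> dist (f m) L < (1/2)^k" for k
  proof -
    obtain M where "\<forall>m\<ge>M. dist (f m) L < (1/2)^k"
      using assms unfolding lim_sequentially by (meson zero_less_divide_iff zero_less_one zero_less_numeral zero_less_power)
    then show ?thesis by (intro exI[of _ "max M (Suc k)"]) auto
  qed
  then show ?thesis using that by metis
qed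

lemma finite_hits:
  assumes "\<And>k. k < mm k"
  shows "finite {k. mm k \<le> (n::nat)}"
proof (rule finite_subset)
  show "{k. mm k \<le> n} \<subseteq> {..<n}" using assms by (auto intro: less_le_trans)
qed simp

lemma card_hits_tendsto_infinity:
  assumes "\<And>k. k < mm k"
  shows "filterlim (\<lambda>n. real (card {k. mm k \<le> n})) at_top sequentially"
  unfolding filterlim_at_top
proof
  fix Z :: real
  define K where "K = nat \<lceil>Z\<rceil>"
  have "Z \<le> real (card {k. mm k \<le> n})" if n: "(\<Sum>k<K. mm k) \<le> n" for n
  proof -
    have "{..<K} \<subseteq> {k. mm k \<le> n}"
    proof
      fix k assume "k \<in> {..<K}"
      then have "mm k \<le> (\<Sum>k<K. mm k)" by (intro member_le_sum) auto
      then show "k \<in> {k. mm k \<le> n}" using n by simp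
    qed
    then have "K \<le> card {k. mm k \<le> n}"
      using card_mono[OF finite_hits[OF assms]] by (metis card_lessThan)
    moreover have "Z \<le> real K" unfolding K_def by (rule real_nat_ceiling_ge)
    ultimately show ?thesis by linarith
  qed
  then show "eventually (\<lambda>n. Z \<le> real (card {k. mm k \<le> n})) sequentially"
    unfolding eventually_sequentially by blast
qed

text \<open>Adding the rapidly summable
  errors z - T (m k) z to z multiplies the n-th coordinate by 1 + #{k. m k \<le> n}.\<close>
lemma amplification:
  fixes P :: "nat \<Rightarrow> 'a::banach \<Rightarrow> 'b::real_normed_vector" and T :: "nat \<Rightarrow> 'a \<Rightarrow> 'a"
  assumes P: "\<And>n. bounded_linear (P n)"
    and conv: "(\<lambda>m. T m z) \<longlonglongrightarrow> z"
    and coord: "\<And>n m. P n (T m z) = (if n < m then P n z else 0)"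
  shows "\<exists>zb lam. (\<forall>n. lam n \<ge> (1::real)) \<and> filterlim lam at_top sequentially \<and>
           (\<forall>n. P n zb = lam n *\<^sub>R P n z)"
proof -
  obtain mm where mm: "\<And>k. k < mm k" and fast: "\<And>k. dist (T (mm k) z) z < (1/2)^k"
    using fast_subsequence[OF conv] by blast
  define y where "y k = z - T (mm k) z" for k
  define lam where "lam n = 1 + real (card {k. mm k \<le> n})" for n
  have "summable (\<lambda>k. norm (y k))"
  proof (rule summable_comparison_test)
    show "\<exists>N. \<forall>k\<ge>N. norm (norm (y k)) \<le> (1/2)^k"
      using fast by (auto simp: y_def dist_norm norm_minus_commute less_imp_le)
  qed (simp add: summable_geometric)
  then have sy: "summable y" by (rule summable_norm_cancel)
  have "P n (z + suminf y) = lam n *\<^sub>R P n z" for n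
  proof -
    have Py: "P n (y k) = (if mm k \<le> n then P n z else 0)" for k
      using coord[of n "mm k"] linear_diff[OF bounded_linear.linear[OF P]]
      by (auto simp: y_def)
    have "P n (z + suminf y) = P n z + (\<Sum>k. P n (y k))"
      using linear_add[OF bounded_linear.linear[OF P]] bounded_linear.suminf[OF P sy] by simp
    also have "(\<Sum>k. P n (y k)) = (\<Sum>k\<in>{k. mm k \<le> n}. P n (y k))"
      by (rule suminf_finite[OF finite_hits[OF mm]]) (simp add: Py)
    also have "\<dots> = real (card {k. mm k \<le> n}) *\<^sub>R P n z"
      by (simp add: Py sum_constant_scaleR)
    finally show ?thesis by (simp add: lam_def scaleR_add_left)
  qed
  moreover have "filterlim lam at_top sequentially"
    unfolding lam_def by (intro filterlim_tendsto_add_at_top[OF tendsto_const] card_hits_tendsto_infinity mm)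
  moreover have "\<forall>n. lam n \<ge> 1" by (simp add: lam_def)
  ultimately show ?thesis by blast
qed

section \<open>Sequence algebras and their modules\<close>

definition trunc_seq :: "nat \<Rightarrow> nat \<Rightarrow> complex" where
  "trunc_seq m = (\<lambda>j. if j < m then 1 else 0)"

lemma pvec_in_seq_algebra: "seq_algebra A N \<Longrightarrow> pvec n \<in> A"
  unfolding seq_algebra_def c00_def pvec_def by auto

lemma trunc_seq_in_seq_algebra:
  assumes "seq_algebra A N"
  shows "trunc_seq m \<in> A"
proof -
  have "{n. trunc_seq m n \<noteq> 0} = {..<m}" by (auto simp: trunc_seq_def)
  then show ?thesis using assms unfolding seq_algebra_def c00_def by auto
qed

lemma module_action_bounded_linear:
  assumes "complex_scalar sc" and "contractive_module A N sc act" and "a \<in> A"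
  shows "bounded_linear (act a)"
proof (rule bounded_linear_intro)
  fix x y show "act a (x + y) = act a x + act a y"
    using assms(2,3) unfolding contractive_module_def by blast
next
  fix r x
  have "act a (sc (complex_of_real r) x) = sc (complex_of_real r) (act a x)"
    using assms(2,3) unfolding contractive_module_def by blast
  then show "act a (r *\<^sub>R x) = r *\<^sub>R act a x"
    using assms(1) unfolding complex_scalar_def by simp
next
  fix x show "norm (act a x) \<le> norm x * N a"
    using assms(2,3) unfolding contractive_module_def by (metis mult.commute)
qed

lemma module_action_zero:
  assumes "seq_algebra A N" and "complex_scalar sc" and "contractive_module A N sc act"
  shows "act (\<lambda>_. 0) z = 0"
proof -
  have "act (\<lambda>n. 0 * pvec 0 n) z = sc 0 (act (pvec 0) z)"
    using assms(3) pvec_in_seq_algebra[OF assms(1)] unfolding contractive_module_def by blast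
  also have "\<dots> = 0" using assms(2) unfolding complex_scalar_def by (metis of_real_0 scaleR_zero_left)
  finally show ?thesis by simp
qed

lemma coordinate_of_truncation:
  assumes "seq_algebra A N" and "complex_scalar sc" and "contractive_module A N sc act"
  shows "act (pvec n) (act (trunc_seq m) z) = (if n < m then act (pvec n) z else 0)"
proof -
  have "act (pvec n) (act (trunc_seq m) z) = act (\<lambda>j. pvec n j * trunc_seq m j) z"
    using assms(3) pvec_in_seq_algebra[OF assms(1)] trunc_seq_in_seq_algebra[OF assms(1)]
    unfolding contractive_module_def by metis
  also have "(\<lambda>j. pvec n j * trunc_seq m j) = (if n < m then pvec n else (\<lambda>_. 0))"
    by (auto simp: pvec_def trunc_seq_def)
  finally show ?thesis using module_action_zero[OF assms] by simp
qed

text \<open>On a dense homogeneous submodule the truncations are contractive (they shrink every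
  coordinate), hence they are contractive on the whole space.\<close>
lemma truncation_contractive:
  assumes "seq_algebra A N" and "complex_scalar sc" and "contractive_module A N sc act"
    and "submodule A sc act X" and "closure X = UNIV" and "homogeneous act X"
  shows "norm (act (trunc_seq m) z) \<le> norm z"
proof (rule contractive_on_dense[where D = X])
  show "continuous_on UNIV (act (trunc_seq m))"
    by (intro linear_continuous_on module_action_bounded_linear[OF assms(2,3)]
        trunc_seq_in_seq_algebra[OF assms(1)])
  fix y assume "y \<in> X"
  moreover have "act (trunc_seq m) y \<in> X"
    using assms(4) \<open>y \<in> X\<close> trunc_seq_in_seq_algebra[OF assms(1)] unfolding submodule_def by blast
  ultimately show "norm (act (trunc_seq m) y) \<le> norm y"
    using assms(6) coordinate_of_truncation[OF assms(1-3)] unfolding homogeneous_def by simp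
qed (fact assms(5))

text \<open>For a vector of the form a.y the truncations converge: approximate a by a finitely
  supported b, which e m fixes for large m, and bound the remainder by N(a - b) |y|.\<close>
lemma truncation_converges_on_products:
  assumes "seq_algebra A N" and "complex_scalar sc" and "contractive_module A N sc act"
    and contr: "\<And>m z. norm (act (trunc_seq m) z) \<le> norm z" and a: "a \<in> A"
  shows "(\<lambda>m. act (trunc_seq m) (act a y)) \<longlonglongrightarrow> act a y"
proof (rule LIMSEQ_I)
  note sa = assms(1)[unfolded seq_algebra_def] and cm = assms(3)[unfolded contractive_module_def]
  have add_closed: "\<And>u v. u \<in> A \<Longrightarrow> v \<in> A \<Longrightarrow> (\<lambda>n. u n + v n) \<in> A"
    and scale_closed: "\<And>c u. u \<in> A \<Longrightarrow> (\<lambda>n. c * u n) \<in> A" using sa by blast+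
  have act_sum: "\<And>u v x. u \<in> A \<Longrightarrow> v \<in> A \<Longrightarrow> act (\<lambda>n. u n + v n) x = act u x + act v x"
    and act_prod: "\<And>u v x. u \<in> A \<Longrightarrow> v \<in> A \<Longrightarrow> act (\<lambda>n. u n * v n) x = act u (act v x)"
    and act_bound: "\<And>u x. u \<in> A \<Longrightarrow> norm (act u x) \<le> N u * norm x" using cm by blast+
  have eA: "trunc_seq m \<in> A" for m using trunc_seq_in_seq_algebra[OF assms(1)] .
  let ?T = "\<lambda>m. act (trunc_seq m)"
  fix \<epsilon> :: real assume "0 < \<epsilon>"
  define \<delta> where "\<delta> = \<epsilon> / (2 * norm y + 1)"
  have "\<delta> > 0" using \<open>0 < \<epsilon>\<close> by (simp add: \<delta>_def add_nonneg_pos)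
  then obtain b where b: "b \<in> c00" "N (\<lambda>n. a n - b n) < \<delta>" using sa a by blast
  then obtain M where M: "\<And>n. b n \<noteq> 0 \<Longrightarrow> n < M"
    unfolding c00_def by (auto simp: finite_nat_set_iff_bounded)
  define d where "d = (\<lambda>n. a n - b n)"
  have bA: "b \<in> A" using b(1) sa by blast
  have dA: "d \<in> A" using add_closed[OF a scale_closed[OF bA, of "-1"]] by (simp add: d_def)
  have "a = (\<lambda>n. b n + d n)" by (simp add: d_def)
  then have split: "act a y = act b y + act d y" using act_sum[OF bA dA] by simp
  have "norm (?T m (act a y) - act a y) < \<epsilon>" if "M \<le> m" for m
  proof -
    have "(\<lambda>j. trunc_seq m j * b j) = b" using M that by (force simp: trunc_seq_def)
    then have fix_b: "?T m (act b y) = act b y" using act_prod[OF eA bA] by metis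
    have "?T m (act a y) = act b y + ?T m (act d y)"
      using split fix_b linear_add[OF bounded_linear.linear[OF
          module_action_bounded_linear[OF assms(2,3) eA]]] by simp
    then have "norm (?T m (act a y) - act a y) \<le> norm (?T m (act d y)) + norm (act d y)"
      using split by (simp add: norm_triangle_ineq4)
    also have "\<dots> \<le> 2 * (N d * norm y)" using contr[of m "act d y"] act_bound[OF dA, of y] by simp
    also have "\<dots> \<le> 2 * (\<delta> * norm y)" using b(2) by (simp add: d_def mult_right_mono)
    also have "\<dots> < \<epsilon>"
    proof -
      have "2 * norm y + 1 > (0::real)" using norm_ge_zero[of y] by linarith
      then have "\<delta> * (2 * norm y + 1) = \<epsilon>" by (simp add: \<delta>_def)
      then show ?thesis using \<open>\<delta> > 0\<close> by (simp add: algebra_simps)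
    qed
    finally show ?thesis .
  qed
  then show "\<exists>M. \<forall>m\<ge>M. norm (?T m (act a y) - act a y) < \<epsilon>" by blast
qed

lemma truncation_approximate_identity:
  assumes "seq_algebra A N" and "complex_scalar sc" and "contractive_module A N sc act"
    and contr: "\<And>m z. norm (act (trunc_seq m) z) \<le> norm z"
    and "closure X = UNIV" and "essential A sc act X"
  shows "(\<lambda>m. act (trunc_seq m) z) \<longlonglongrightarrow> z"
proof -
  let ?S = "{act a x | a x. a \<in> A \<and> x \<in> X}"
  have lin: "linear (act (trunc_seq m))" for m
    by (intro bounded_linear.linear module_action_bounded_linear[OF assms(2,3)]
        trunc_seq_in_seq_algebra[OF assms(1)])
  have span: "(\<lambda>m. act (trunc_seq m) w) \<longlonglongrightarrow> w" if w_span: "w \<in> cplx_span sc ?S" for w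
  proof -
    obtain k :: nat and c v where w: "w = (\<Sum>i<k. sc (c i) (v i))" and v: "\<forall>i<k. v i \<in> ?S"
      using w_span unfolding cplx_span_def by blast
    have "(\<lambda>m. act (trunc_seq m) (sc (c i) (v i))) \<longlonglongrightarrow> sc (c i) (v i)" if "i < k" for i
    proof -
      obtain a y where "a \<in> A" "v i = act a y" using v \<open>i < k\<close> by blast
      moreover have "(\<lambda>n. c i * a n) \<in> A" using assms(1) \<open>a \<in> A\<close> unfolding seq_algebra_def by blast
      ultimately show ?thesis
        using truncation_converges_on_products[OF assms(1-3) contr] assms(3)
        unfolding contractive_module_def by metis
    qed
    then show ?thesis unfolding w linear_sum[OF lin] by (intro tendsto_sum) simp
  qed
  have "closure X \<subseteq> closure (cplx_span sc ?S)"
    using assms(6) unfolding essential_def by (intro closure_minimal) blast+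
  then show ?thesis using assms(5)
    by (intro approximate_identity_closure[OF lin contr span]) auto
qed

theorem proposition1p7:
  fixes A :: "(nat \<Rightarrow> complex) set" and N :: "(nat \<Rightarrow> complex) \<Rightarrow> real"
    and sc :: "complex \<Rightarrow> 'x::banach \<Rightarrow> 'x"
    and act :: "(nat \<Rightarrow> complex) \<Rightarrow> 'x \<Rightarrow> 'x"
    and X :: "'x set"
  assumes "seq_algebra A N"
    and "complex_scalar sc"
    and "contractive_module A N sc act"
    and "submodule A sc act X"
    and "closure X = UNIV"
    and "essential A sc act X"
    and "homogeneous act X"
  shows "\<forall>x. \<exists>xb lam. (\<forall>n. lam n \<ge> (1::real)) \<and> filterlim lam at_top sequentially \<and>
           (\<forall>n. act (pvec n) xb = lam n *\<^sub>R act (pvec n) x)"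
proof
  fix x
  have contr: "norm (act (trunc_seq m) z) \<le> norm z" for m z
    using truncation_contractive[OF assms(1-5,7)] .
  show "\<exists>xb lam. (\<forall>n. lam n \<ge> (1::real)) \<and> filterlim lam at_top sequentially \<and>
           (\<forall>n. act (pvec n) xb = lam n *\<^sub>R act (pvec n) x)"
  proof (rule amplification)
    show "bounded_linear (act (pvec n))" for n
      using module_action_bounded_linear[OF assms(2,3) pvec_in_seq_algebra[OF assms(1)]] .
    show "(\<lambda>m. act (trunc_seq m) x) \<longlonglongrightarrow> x"
      using truncation_approximate_identity[OF assms(1-3) contr assms(5,6)] .
    show "act (pvec n) (act (trunc_seq m) x) = (if n < m then act (pvec n) x else 0)" for n m
      using coordinate_of_truncation[OF assms(1-3)] .
  qed
qed

end
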